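(* Let $\lambda$ be a nonzero real number. For any integer $p\ge1$, \[ \sum_{k=1}^{\infty}\frac{H_{k,\lambda}^{(p)}}{k(k+1)}=\zeta_{\lambda}(p+1), \] and \[ \sum_{k=1}^{\infty}\frac{H_{k,\lambda}^{(p)}}{k(k+2)}=\frac{1}{2}\bigg(\zeta_{\lambda}(p+1)+\sum_{k=2}^{p}(-1)^{k}\zeta_{\lambda}(p+2-k)+\frac{(-1)^{p+1}}{\lambda+1}\bigg), \] i.e. $\frac12\big(\zeta_{\lambda}(p+1)+\zeta_{\lambda}(p)-\zeta_{\lambda}(p-1)+\cdots+(-1)^{p}\zeta_{\lambda}(2)+\frac{(-1)^{p+1}}{\lambda+1}\big)$.
   Context: For real $x$ and $\mu\neq 0$, set $(x)_{0,\mu}=1$ and $(x)_{n,\mu}=x(x-\mu)\cdots(x-(n-1)\mu)$ for $n\ge1$. The degenerate zeta function is $\zeta_{\lambda}(s)=\sum_{n=1}^{\infty}\frac{(-1)^{n-1}\lambda^{n-1}(1)_{n,1/\lambda}}{(n-1)!\,n^{s}}$ for $\mathrm{Re}(s)>1$. The degenerate higher-order harmonic numbers are $H_{0,\lambda}^{(k)}=0$ and $H_{n,\lambda}^{(k)}=\sum_{l=1}^{n}\frac{(-\lambda)^{l-1}(1)_{l,1/\lambda}}{l^{k}(l-1)!}$ for $n\ge1$. *)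

theory Defs
  imports Complex_Main
begin

definition gen_fall :: "real \<Rightarrow> real \<Rightarrow> nat \<Rightarrow> real" where
  "gen_fall x \<mu> n = (\<Prod>j<n. (x - real j * \<mu>))"

definition dcoef :: "real \<Rightarrow> nat \<Rightarrow> real" where
  "dcoef lam n = (-1) ^ (n - 1) * lam ^ (n - 1) * gen_fall 1 (1 / lam) n / fact (n - 1)"

definition dzeta_term :: "real \<Rightarrow> real \<Rightarrow> nat \<Rightarrow> real" where
  "dzeta_term lam s n = dcoef lam (n + 1) / (real (n + 1)) powr s"

definition dzeta :: "real \<Rightarrow> real \<Rightarrow> real" where
  "dzeta lam s = (\<Sum>n. dzeta_term lam s n)"

definition dharm :: "real \<Rightarrow> nat \<Rightarrow> nat \<Rightarrow> real" where
  "dharm lam k n = (\<Sum>l = 1..n. (-lam) ^ (l - 1) * gen_fall 1 (1 / lam) l / (real l ^ k * fact (l - 1)))"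

end

theory Submission
  imports Defs "HOL-Analysis.Analysis" "HOL-Real_Asymp.Real_Asymp"
begin

(* Write a n = dcoef lam (n + 1) = (1 - lam)_n / n! (rising factorial), so that
   H_N = sum_{n<N} a n / (n + 1)^p and zeta_lam s = sum_n a n / (n + 1)^s.
   Summation by parts turns sum_k H_(k+1) / ((k + 1)(k + 2)) into the zeta series at p + 1 minus
   the boundary term H_N / (N + 1), and sum_k H_(k+1) / ((k + 1)(k + 3)) into half of that series
   plus sum_n a n / ((n + 1)^p (n + 2)), minus two boundary terms.  Since a n eventually has
   constant sign, convergent zeta series converge absolutely, and a Kronecker-type argument makes
   the boundary terms vanish.  Expanding 1 / (x^p (x + 1)) in partial fractions leaves the series
   sum_n a n / ((n + 1)(n + 2)), which telescopes to 1 / (lam + 1) because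
   a n / (n + 1) - a (n + 1) / (n + 2) = (1 + lam) a n / ((n + 1)(n + 2)). *)

lemma summable_abs_if_eventually_sign:
  fixes f :: "nat \<Rightarrow> real"
  assumes "summable f"
    and "eventually (\<lambda>n. 0 \<le> f n) sequentially \<or> eventually (\<lambda>n. f n \<le> 0) sequentially"
  shows "summable (\<lambda>n. \<bar>f n\<bar>)"
  using assms(2)
proof
  assume "eventually (\<lambda>n. 0 \<le> f n) sequentially"
  then have "eventually (\<lambda>n. \<bar>f n\<bar> = f n) sequentially"
    by eventually_elim simp
  then show ?thesis using assms(1) by (simp add: summable_cong)
next
  assume "eventually (\<lambda>n. f n \<le> 0) sequentially"
  then have "eventually (\<lambda>n. \<bar>f n\<bar> = - f n) sequentially"
    by eventually_elim simp
  then show ?thesis using summable_minus[OF assms(1)] by (simp add: summable_cong)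
qed

lemma Kronecker_tendsto_zero:
  fixes b :: "nat \<Rightarrow> real"
  assumes "summable (\<lambda>n. \<bar>b n\<bar>)" "d \<ge> 1"
  shows "(\<lambda>N. (\<Sum>n<N. real (Suc n) * b n) / (real N + d)) \<longlonglongrightarrow> 0"
proof -
  define a where "a k N = (if k < N then real (Suc k) * b k / (real N + d) else 0)" for k N
  have lim: "(\<lambda>N. a k N) \<longlonglongrightarrow> 0" for k
  proof -
    have "eventually (\<lambda>N. real (Suc k) * b k / (real N + d) = a k N) sequentially"
      unfolding a_def eventually_sequentially by (intro exI[of _ "Suc k"]) auto
    moreover have "(\<lambda>N. real (Suc k) * b k / (real N + d)) \<longlonglongrightarrow> 0"
      by real_asymp
    ultimately show ?thesis by (rule Lim_transform_eventually[rotated])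
  qed
  have bound: "norm (a k N) \<le> \<bar>b k\<bar>" for k N
  proof (cases "k < N")
    case True
    then have "real (Suc k) / (real N + d) \<le> 1"
      using assms(2) by (simp add: field_simps)
    from mult_left_mono[OF this abs_ge_zero[of "b k"]] show ?thesis
      using True assms(2) by (simp add: a_def abs_mult abs_divide mult.commute)
  qed (simp add: a_def)
  have "(\<lambda>N. \<Sum>k. a k N) \<longlonglongrightarrow> (\<Sum>k. 0::real)"
    using tannerys_theorem[of a "\<lambda>_. 0" sequentially "\<lambda>k. \<bar>b k\<bar>", OF lim _ assms(1)] bound
    by (simp add: always_eventually)
  moreover have "(\<Sum>k. a k N) = (\<Sum>n<N. real (Suc n) * b n) / (real N + d)" for N
    by (subst suminf_finite[of "{..<N}"]) (auto simp: a_def sum_divide_distrib)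
  ultimately show ?thesis by simp
qed

lemma limit_eq_zero_if_summable_abs_div_Suc:
  fixes u :: "nat \<Rightarrow> real"
  assumes "u \<longlonglongrightarrow> L" "summable (\<lambda>n. \<bar>u n\<bar> / real (Suc n))"
  shows "L = 0"
proof (rule ccontr)
  assume "L \<noteq> 0"
  then have "eventually (\<lambda>n. \<bar>L\<bar> / 2 < \<bar>u n\<bar>) sequentially"
    using order_tendstoD(1)[OF tendsto_rabs[OF assms(1)], of "\<bar>L\<bar> / 2"] by simp
  then have "eventually (\<lambda>n. norm (\<bar>L\<bar> / 2 / real (Suc n)) \<le> \<bar>u n\<bar> / real (Suc n)) sequentially"
    unfolding real_norm_def abs_divide abs_abs abs_of_nat abs_numeral
    by eventually_elim (intro divide_right_mono, auto)
  then have "summable (\<lambda>n. \<bar>L\<bar> / 2 * inverse (real (Suc n)))"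
    using assms(2) unfolding divide_inverse[of "\<bar>L\<bar> / 2"] by (rule summable_comparison_test_ev)
  then have "summable (\<lambda>n. inverse (real (Suc n)))"
    using \<open>L \<noteq> 0\<close> by simp
  then show False
    using not_summable_harmonic[where 'a=real] summable_Suc_iff[of "\<lambda>n. inverse (real n)"] by simp
qed

lemma inverse_power_mult_Suc_partial_fractions:
  fixes x :: "'a::field"
  assumes "x \<noteq> 0" "x + 1 \<noteq> 0" "p \<ge> 1"
  shows "1 / (x ^ p * (x + 1)) = (\<Sum>j=2..p. (-1) ^ j / x ^ (p + 2 - j)) + (-1) ^ (p + 1) / (x * (x + 1))"
  using assms(3)
proof (induction p rule: dec_induct)
  case base
  show ?case by simp
next
  case (step p)
  have "1 / (x ^ Suc p * (x + 1)) = 1 / x ^ Suc p - 1 / (x ^ p * (x + 1))"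
    using assms(1,2) by (simp add: divide_simps)
  moreover have "(\<Sum>j=2..Suc p. (-1) ^ j / x ^ (Suc p + 2 - j))
      = 1 / x ^ Suc p - (\<Sum>j=2..p. (-1) ^ j / x ^ (p + 2 - j))"
  proof -
    have "(\<Sum>j=2..Suc p. (-1) ^ j / x ^ (Suc p + 2 - j))
        = 1 / x ^ Suc p + (\<Sum>j=Suc 2..Suc p. (-1) ^ j / x ^ (Suc p + 2 - j))"
      using step(1) by (subst sum.atLeast_Suc_atMost) auto
    also have "(\<Sum>j=Suc 2..Suc p. (-1) ^ j / x ^ (Suc p + 2 - j))
        = (\<Sum>j=2..p. (-1) ^ Suc j / x ^ (p + 2 - j))"
      by (subst sum.shift_bounds_cl_Suc_ivl) simp
    finally show ?thesis
      by (simp add: sum_negf[symmetric])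
  qed
  ultimately show ?case
    using step(3) by simp
qed

lemma summation_by_parts_div_k1_k2:
  fixes h :: "nat \<Rightarrow> real"
  assumes "h 0 = 0"
  shows "(\<Sum>k<N. h (k + 1) / (real (k + 1) * real (k + 2)))
       = (\<Sum>k<N. (h (Suc k) - h k) / real (Suc k)) - h N / (real N + 1)"
proof (induction N)
  case (Suc N)
  have "h (Suc N) / (real (N + 1) * real (N + 2))
      = (h (Suc N) - h N) / real (Suc N) - h (Suc N) / (real (Suc N) + 1) + h N / (real N + 1)"
    by (simp add: divide_simps) (simp add: algebra_simps)
  then show ?case
    using Suc by simp
qed (simp add: assms)

lemma summation_by_parts_div_k1_k3:
  fixes h :: "nat \<Rightarrow> real"
  assumes "h 0 = 0"
  shows "(\<Sum>k<N. h (k + 1) / (real (k + 1) * real (k + 3)))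
       = ((\<Sum>k<N. (h (Suc k) - h k) / real (Suc k)) + (\<Sum>k<N. (h (Suc k) - h k) / real (k + 2))
          - h N / (real N + 1) - h N / (real N + 2)) / 2"
proof (induction N)
  case (Suc N)
  have "h (Suc N) / (real (N + 1) * real (N + 3))
      = ((h (Suc N) - h N) / real (Suc N) + (h (Suc N) - h N) / real (N + 2)
         - h (Suc N) / (real (Suc N) + 1) - h (Suc N) / (real (Suc N) + 2)
         + h N / (real N + 1) + h N / (real N + 2)) / 2"
    by (simp add: divide_simps) (simp add: algebra_simps)
  then show ?case
    using Suc by simp
qed (simp add: assms)

lemma dcoef_Suc_eq_pochhammer:
  assumes "lam \<noteq> 0"
  shows "dcoef lam (Suc n) = pochhammer (1 - lam) n / fact n"
proof -
  have "gen_fall 1 (1 / lam) (Suc n) = (\<Prod>j<n. 1 - real (Suc j) / lam)"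
    unfolding gen_fall_def prod.lessThan_Suc_shift by simp
  then have "(-1) ^ n * lam ^ n * gen_fall 1 (1 / lam) (Suc n)
      = (\<Prod>j<n. - lam * (1 - real (Suc j) / lam))"
    unfolding prod.distrib by (simp add: power_minus[symmetric])
  also have "\<dots> = pochhammer (1 - lam) n"
    unfolding pochhammer_prod atLeast0LessThan using assms by (intro prod.cong) (auto simp: field_simps)
  finally show ?thesis by (simp add: dcoef_def)
qed

lemma dcoef_Suc_Suc:
  assumes "lam \<noteq> 0"
  shows "dcoef lam (Suc (Suc n)) = dcoef lam (Suc n) * (real (Suc n) - lam) / real (Suc n)"
  using assms by (simp add: dcoef_Suc_eq_pochhammer pochhammer_Suc field_simps)

lemma dcoef_eventually_sign:
  assumes "lam \<noteq> 0"
  shows "eventually (\<lambda>n. 0 \<le> dcoef lam (Suc n)) sequentially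
       \<or> eventually (\<lambda>n. dcoef lam (Suc n) \<le> 0) sequentially"
proof -
  define N where "N = nat \<lceil>lam\<rceil>"
  have "0 < 1 - lam + real N"
    unfolding N_def by linarith
  then have tail_nonneg: "0 \<le> pochhammer (1 - lam + real N) m / fact n" for m n
    by (simp add: pochhammer_nonneg)
  have split: "dcoef lam (Suc n)
      = pochhammer (1 - lam) N * (pochhammer (1 - lam + real N) (n - N) / fact n)"
    if "N \<le> n" for n
    using assms pochhammer_product[OF that, of "1 - lam"] by (simp add: dcoef_Suc_eq_pochhammer)
  show ?thesis
  proof (cases "0 \<le> pochhammer (1 - lam) N")
    case True
    have "0 \<le> dcoef lam (Suc n)" if "N \<le> n" for n
      unfolding split[OF that] using True tail_nonneg by (rule mult_nonneg_nonneg)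
    then show ?thesis unfolding eventually_sequentially by blast
  next
    case False
    have "dcoef lam (Suc n) \<le> 0" if "N \<le> n" for n
      unfolding split[OF that] using False tail_nonneg by (intro mult_nonpos_nonneg) auto
    then show ?thesis unfolding eventually_sequentially by blast
  qed
qed

lemma dzeta_term_of_nat: "dzeta_term lam (real m) n = dcoef lam (Suc n) / real (Suc n) ^ m"
  by (simp add: dzeta_term_def powr_realpow)

lemma summable_abs_dzeta_term:
  assumes "lam \<noteq> 0" "summable (dzeta_term lam s)"
  shows "summable (\<lambda>n. \<bar>dzeta_term lam s n\<bar>)"
proof (rule summable_abs_if_eventually_sign[OF assms(2)])
  show "eventually (\<lambda>n. 0 \<le> dzeta_term lam s n) sequentially
      \<or> eventually (\<lambda>n. dzeta_term lam s n \<le> 0) sequentially"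
    using dcoef_eventually_sign[OF assms(1)]
  proof
    assume "eventually (\<lambda>n. 0 \<le> dcoef lam (Suc n)) sequentially"
    then have "eventually (\<lambda>n. 0 \<le> dzeta_term lam s n) sequentially"
      by eventually_elim (simp add: dzeta_term_def)
    then show ?thesis ..
  next
    assume "eventually (\<lambda>n. dcoef lam (Suc n) \<le> 0) sequentially"
    then have "eventually (\<lambda>n. dzeta_term lam s n \<le> 0) sequentially"
      by eventually_elim (simp add: dzeta_term_def divide_nonpos_pos)
    then show ?thesis ..
  qed
qed

lemma summable_dzeta_term_mono:
  assumes "lam \<noteq> 0" "summable (dzeta_term lam t)" "t \<le> s"
  shows "summable (dzeta_term lam s)"
proof (rule summable_comparison_test'[OF summable_abs_dzeta_term[OF assms(1,2)]])
  fix n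
  have "real (Suc n) powr t \<le> real (Suc n) powr s"
    using assms(3) by (intro powr_mono) auto
  then show "norm (dzeta_term lam s n) \<le> \<bar>dzeta_term lam t n\<bar>"
    by (simp add: dzeta_term_def abs_divide divide_left_mono)
qed

lemma dcoef_div_Suc_mult_Suc_Suc_sums:
  assumes "lam \<noteq> 0" "summable (dzeta_term lam 2)"
  shows "(\<lambda>n. dcoef lam (Suc n) / (real (Suc n) * real (Suc (Suc n)))) sums (1 / (lam + 1))"
proof -
  define u where "u n = dcoef lam (Suc n) / real (Suc n)" for n
  define d where "d n = dcoef lam (Suc n) / (real (Suc n) * real (Suc (Suc n)))" for n
  have diff: "u n - u (Suc n) = (1 + lam) * d n" for n
    unfolding u_def d_def dcoef_Suc_Suc[OF assms(1)]
    by (simp add: divide_simps) (simp add: algebra_simps)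
  have dzeta_term_2: "dzeta_term lam 2 n = u n / real (Suc n)" for n
    using dzeta_term_of_nat[of lam 2 n] by (simp add: u_def power2_eq_square)
  have abs_summable: "summable (\<lambda>n. \<bar>u n\<bar> / real (Suc n))"
    using summable_abs_dzeta_term[OF assms] by (simp add: dzeta_term_2 abs_divide)
  have "summable d"
  proof (rule summable_comparison_test'[OF abs_summable])
    fix n
    show "norm (d n) \<le> \<bar>u n\<bar> / real (Suc n)"
      by (simp add: d_def u_def abs_divide abs_mult divide_left_mono)
  qed
  then have "summable (\<lambda>n. u n - u (Suc n))"
    by (simp add: diff)
  then have "(\<lambda>n. u 0 - (\<Sum>k<n. u k - u (Suc k))) \<longlonglongrightarrow> u 0 - (\<Sum>k. u k - u (Suc k))"
    by (intro tendsto_diff tendsto_const summable_LIMSEQ)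
  then obtain L where "u \<longlonglongrightarrow> L"
    unfolding sum_lessThan_telescope' by auto
  moreover from this have "L = 0"
    using abs_summable by (rule limit_eq_zero_if_summable_abs_div_Suc)
  moreover have "u 0 = 1"
    by (simp add: u_def dcoef_Suc_eq_pochhammer assms(1))
  ultimately have "(\<lambda>n. u n - u (Suc n)) sums 1"
    using telescope_sums'[of u L] by simp
  then have "(\<lambda>n. (1 + lam) * d n) sums 1"
    by (simp only: diff)
  moreover have "(\<lambda>n. (1 + lam) * d n) sums ((1 + lam) * suminf d)"
    using \<open>summable d\<close> by (intro sums_mult summable_sums)
  ultimately have "(1 + lam) * suminf d = 1"
    using sums_unique2 by blast
  \<comment> \<open>so the hypothesis excludes lam = -1, where 1 / (lam + 1) would be the junk value 0\<close>
  then have "suminf d = 1 / (lam + 1)"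
    by (cases "lam + 1 = 0") (auto simp: eq_divide_eq add.commute mult.commute)
  then have "d sums (1 / (lam + 1))"
    using summable_sums[OF \<open>summable d\<close>] by simp
  then show ?thesis
    unfolding d_def .
qed

lemma dcoef_div_power_mult_Suc_sums:
  assumes "lam \<noteq> 0" "p \<ge> 1" "summable (dzeta_term lam 2)"
  shows "(\<lambda>n. dcoef lam (Suc n) / real (Suc n) ^ p / real (n + 2))
           sums ((\<Sum>j=2..p. (-1) ^ j * dzeta lam (real p + 2 - real j)) + (-1) ^ (p + 1) / (lam + 1))"
proof -
  have term_eq: "dcoef lam (Suc n) / real (Suc n) ^ p / real (n + 2)
      = (\<Sum>j=2..p. (-1) ^ j * dzeta_term lam (real p + 2 - real j) n)
        + (-1) ^ (p + 1) * (dcoef lam (Suc n) / (real (Suc n) * real (Suc (Suc n))))" for n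
  proof -
    define x where "x = real (Suc n)"
    define c where "c = dcoef lam (Suc n)"
    have x: "x \<noteq> 0" "x + 1 \<noteq> 0" "real (n + 2) = x + 1" "real (Suc (Suc n)) = x + 1"
      by (simp_all add: x_def)
    have "c / x ^ p / (x + 1) = c * (1 / (x ^ p * (x + 1)))"
      by simp
    also have "\<dots> = c * ((\<Sum>j=2..p. (-1) ^ j / x ^ (p + 2 - j)) + (-1) ^ (p + 1) / (x * (x + 1)))"
      using inverse_power_mult_Suc_partial_fractions[OF x(1,2) assms(2)] by simp
    also have "\<dots> = (\<Sum>j=2..p. (-1) ^ j * (c / x ^ (p + 2 - j))) + (-1) ^ (p + 1) * (c / (x * (x + 1)))"
      by (simp add: distrib_left right_diff_distrib sum_distrib_left mult_ac)
    also have "(\<Sum>j=2..p. (-1) ^ j * (c / x ^ (p + 2 - j)))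
        = (\<Sum>j=2..p. (-1) ^ j * dzeta_term lam (real p + 2 - real j) n)"
    proof (intro sum.cong refl)
      fix j assume "j \<in> {2..p}"
      then show "(-1) ^ j * (c / x ^ (p + 2 - j)) = (-1) ^ j * dzeta_term lam (real p + 2 - real j) n"
        using dzeta_term_of_nat[of lam "p + 2 - j" n] by (simp add: of_nat_diff c_def x_def add_ac)
    qed
    finally show ?thesis
      unfolding x(3,4) by (simp add: c_def x_def)
  qed
  have "(\<lambda>n. (-1) ^ j * dzeta_term lam (real p + 2 - real j) n)
      sums ((-1) ^ j * dzeta lam (real p + 2 - real j))" if "j \<in> {2..p}" for j
  proof -
    have "summable (dzeta_term lam (real p + 2 - real j))"
      using that by (intro summable_dzeta_term_mono[OF assms(1,3)]) auto
    then show ?thesis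
      unfolding dzeta_def by (intro sums_mult summable_sums)
  qed
  note dzeta_sums = this
  have "(\<lambda>n. (\<Sum>j=2..p. (-1) ^ j * dzeta_term lam (real p + 2 - real j) n)
        + (-1) ^ (p + 1) * (dcoef lam (Suc n) / (real (Suc n) * real (Suc (Suc n)))))
      sums ((\<Sum>j=2..p. (-1) ^ j * dzeta lam (real p + 2 - real j)) + (-1) ^ (p + 1) * (1 / (lam + 1)))"
    using sums_mult[OF dcoef_div_Suc_mult_Suc_Suc_sums[OF assms(1,3)]]
    by (intro sums_add sums_sum dzeta_sums)
  then show ?thesis
    unfolding term_eq by simp
qed

lemma dharm_Suc: "dharm lam k (Suc n) = dharm lam k n + dcoef lam (Suc n) / real (Suc n) ^ k"
proof -
  have "(-lam) ^ n = (-1) ^ n * lam ^ n"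
    by (simp add: power_mult_distrib[symmetric])
  then show ?thesis
    unfolding dharm_def dcoef_def by (subst sum.cl_ivl_Suc) (simp add: ac_simps)
qed

lemma dharm_eq_sum_dzeta_term:
  "dharm lam p N = (\<Sum>n<N. real (Suc n) * dzeta_term lam (real p + 1) n)"
proof (induction N)
  case (Suc N)
  have "dcoef lam (Suc N) / real (Suc N) ^ p = real (Suc N) * dzeta_term lam (real p + 1) N"
    using dzeta_term_of_nat[of lam "Suc p" N] by (simp add: add.commute)
  then show ?case
    using Suc by (simp add: dharm_Suc)
qed (simp add: dharm_def)

lemma dharm_div_tendsto_zero:
  assumes "lam \<noteq> 0" "summable (dzeta_term lam (real p + 1))" "d \<ge> 1"
  shows "(\<lambda>N. dharm lam p N / (real N + d)) \<longlonglongrightarrow> 0"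
  unfolding dharm_eq_sum_dzeta_term
  using Kronecker_tendsto_zero[OF summable_abs_dzeta_term[OF assms(1,2)] assms(3)] .

lemma dharm_div_k1_k2_sums:
  assumes "lam \<noteq> 0" "summable (dzeta_term lam (real p + 1))"
  shows "(\<lambda>k. dharm lam p (k + 1) / (real (k + 1) * real (k + 2))) sums dzeta lam (real p + 1)"
proof -
  have "dcoef lam (Suc k) / real (Suc k) ^ p / real (Suc k) = dzeta_term lam (real p + 1) k" for k
    using dzeta_term_of_nat[of lam "Suc p" k] by (simp add: add.commute)
  moreover have "dharm lam p 0 = 0"
    by (simp add: dharm_def)
  ultimately have partial_sums: "(\<Sum>k<N. dharm lam p (k + 1) / (real (k + 1) * real (k + 2)))
      = (\<Sum>k<N. dzeta_term lam (real p + 1) k) - dharm lam p N / (real N + 1)" for N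
    using summation_by_parts_div_k1_k2[of "dharm lam p" N] by (simp add: dharm_Suc)
  have "(\<lambda>N. (\<Sum>k<N. dzeta_term lam (real p + 1) k) - dharm lam p N / (real N + 1))
      \<longlonglongrightarrow> dzeta lam (real p + 1) - 0"
    unfolding dzeta_def using assms
    by (intro tendsto_diff summable_LIMSEQ dharm_div_tendsto_zero) auto
  then show ?thesis
    unfolding sums_def partial_sums by simp
qed

lemma dharm_div_k1_k3_sums:
  assumes "lam \<noteq> 0" "p \<ge> 1" "summable (dzeta_term lam 2)"
  shows "(\<lambda>k. dharm lam p (k + 1) / (real (k + 1) * real (k + 3)))
           sums ((1 / 2) * (dzeta lam (real p + 1)
                  + (\<Sum>k = 2..p. (-1) ^ k * dzeta lam (real p + 2 - real k))
                  + (-1) ^ (p + 1) / (lam + 1)))"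
proof -
  define E where "E = (\<Sum>j=2..p. (-1) ^ j * dzeta lam (real p + 2 - real j)) + (-1) ^ (p + 1) / (lam + 1)"
  have summable_p1: "summable (dzeta_term lam (real p + 1))"
    using assms by (intro summable_dzeta_term_mono[OF assms(1,3)]) auto
  have "dcoef lam (Suc k) / real (Suc k) ^ p / real (Suc k) = dzeta_term lam (real p + 1) k" for k
    using dzeta_term_of_nat[of lam "Suc p" k] by (simp add: add.commute)
  moreover have "dharm lam p 0 = 0"
    by (simp add: dharm_def)
  ultimately have partial_sums: "(\<Sum>k<N. dharm lam p (k + 1) / (real (k + 1) * real (k + 3)))
      = ((\<Sum>k<N. dzeta_term lam (real p + 1) k)
         + (\<Sum>k<N. dcoef lam (Suc k) / real (Suc k) ^ p / real (k + 2))
         - dharm lam p N / (real N + 1) - dharm lam p N / (real N + 2)) / 2" for N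
    using summation_by_parts_div_k1_k3[of "dharm lam p" N] by (simp add: dharm_Suc)
  have "(\<lambda>N. ((\<Sum>k<N. dzeta_term lam (real p + 1) k)
         + (\<Sum>k<N. dcoef lam (Suc k) / real (Suc k) ^ p / real (k + 2))
         - dharm lam p N / (real N + 1) - dharm lam p N / (real N + 2)) / 2)
      \<longlonglongrightarrow> (dzeta lam (real p + 1) + E - 0 - 0) / 2"
    using dcoef_div_power_mult_Suc_sums[OF assms] summable_p1 unfolding dzeta_def E_def sums_def
    by (intro tendsto_intros summable_LIMSEQ dharm_div_tendsto_zero[OF assms(1)]) auto
  then show ?thesis
    unfolding sums_def partial_sums E_def by (simp add: add_diff_eq)
qed

theorem theorem5:
  fixes lam :: real and p :: nat
  assumes "lam \<noteq> 0" and "p \<ge> 1"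
  shows "(summable (dzeta_term lam (real p + 1)) \<longrightarrow>
           (\<lambda>k. dharm lam p (k + 1) / (real (k + 1) * real (k + 2)))
             sums dzeta lam (real p + 1))
       \<and> (summable (dzeta_term lam 2) \<longrightarrow>
           (\<lambda>k. dharm lam p (k + 1) / (real (k + 1) * real (k + 3)))
             sums ((1 / 2) * (dzeta lam (real p + 1)
                    + (\<Sum>k = 2..p. (-1) ^ k * dzeta lam (real p + 2 - real k))
                    + (-1) ^ (p + 1) / (lam + 1))))"
  using dharm_div_k1_k2_sums dharm_div_k1_k3_sums assms by blast

end
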